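(* If $G$ is an oriented graph derived from a Burling tree $(T,r,\ell,c)$, then $G$ can be derived from a Burling tree $(T',r',\ell',c')$ such that, for every $v\in V(T')$, $v\in V(G)$ if and only if $v$ is neither the root nor a last-born of $T'$. Moreover, for every arc $uv$ of $G$, $uv$ is a top (resp. bottom) arc of $G$ with respect to $T$ if and only if it is a top (resp. bottom) arc of $G$ with respect to $T'$.
   Context: Oriented graphs are finite, without loops, multiple arcs or pairs of opposite arcs. In a rooted tree $T$ with root $r$, each non-root vertex $v$ has a parent $p(v)$; children, leaves, ancestors and descendants are as usual. A branch is a sequence $v_1\dots v_k$ ($k\ge0$) with $v_i$ the parent of $v_{i+1}$; it starts at $v_1$. A Burling tree is a 4-tuple $(T,r,\ell,c)$: $T$ a rooted tree with root $r$; $\ell$ assigns to each non-leaf vertex $v$ one of its children $\ell(v)$ (the last-born of $v$); $c$ assigns to every vertex $v$ that is neither the root nor a last-born the vertex-set of a (possibly empty) branch starting at $\ell(p(v))$, and $c(v)=\emptyset$ if $v$ is the root or a last-born. The oriented graph fully derived from it has vertex-set $V(T)$ and an arc $uv$ iff $v\in c(u)$; an oriented graph is derived from the Burling tree if it is an induced subgraph of the fully derived one (so $V(G)\subseteq V(T)$). If $G$ is derived from $T$ and $uv$ is an arc of $G$, then all out-neighbors of $u$ lie on one branch of $T$; $uv$ is a top arc with respect to $T$ if $v$ is the out-neighbor of $u$ closest in $T$ to the root, and a bottom arc with respect to $T$ if $v$ is the out-neighbor of $u$ furthest in $T$ from the root. *)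

theory Defs
  imports Main
begin

text \<open>A rooted tree is given by a finite vertex set V, a root r and a parent
function p (only meaningful on V - {r}).\<close>

definition rooted_tree :: "'a set \<Rightarrow> 'a \<Rightarrow> ('a \<Rightarrow> 'a) \<Rightarrow> bool" where
  "rooted_tree V r p \<longleftrightarrow> finite V \<and> r \<in> V \<and> (\<forall>v \<in> V - {r}. p v \<in> V)
     \<and> (\<forall>v \<in> V. \<exists>n. (p ^^ n) v = r)"

definition is_child :: "'a set \<Rightarrow> 'a \<Rightarrow> ('a \<Rightarrow> 'a) \<Rightarrow> 'a \<Rightarrow> 'a \<Rightarrow> bool" where
  "is_child V r p v w \<longleftrightarrow> w \<in> V \<and> w \<noteq> r \<and> p w = v"

definition is_leaf :: "'a set \<Rightarrow> 'a \<Rightarrow> ('a \<Rightarrow> 'a) \<Rightarrow> 'a \<Rightarrow> bool" where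
  "is_leaf V r p v \<longleftrightarrow> \<not> (\<exists>w. is_child V r p v w)"

definition is_branch_set :: "'a set \<Rightarrow> 'a \<Rightarrow> ('a \<Rightarrow> 'a) \<Rightarrow> 'a \<Rightarrow> 'a set \<Rightarrow> bool" where
  "is_branch_set V r p x S \<longleftrightarrow> S = {} \<or>
     (\<exists>xs. xs \<noteq> [] \<and> hd xs = x \<and> x \<in> V \<and> set xs = S \<and>
        (\<forall>i. Suc i < length xs \<longrightarrow> is_child V r p (xs ! i) (xs ! Suc i)))"

definition is_last_born :: "'a set \<Rightarrow> 'a \<Rightarrow> ('a \<Rightarrow> 'a) \<Rightarrow> ('a \<Rightarrow> 'a) \<Rightarrow> 'a \<Rightarrow> bool" where
  "is_last_born V r p l v \<longleftrightarrow> (\<exists>u \<in> V. \<not> is_leaf V r p u \<and> v = l u)"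

text \<open>Burling tree (T, r, l, c) with T = (V, p).\<close>
definition burling_tree ::
  "'a set \<Rightarrow> 'a \<Rightarrow> ('a \<Rightarrow> 'a) \<Rightarrow> ('a \<Rightarrow> 'a) \<Rightarrow> ('a \<Rightarrow> 'a set) \<Rightarrow> bool" where
  "burling_tree V r p l c \<longleftrightarrow> rooted_tree V r p
     \<and> (\<forall>v \<in> V. \<not> is_leaf V r p v \<longrightarrow> is_child V r p v (l v))
     \<and> (\<forall>v \<in> V. if v = r \<or> is_last_born V r p l v then c v = {}
                 else is_branch_set V r p (l (p v)) (c v))"

text \<open>G = (VG, AG) is derived from the Burling tree: an induced subgraph of the
fully derived graph.\<close>
definition derived ::
  "'a set \<Rightarrow> ('a \<times> 'a) set \<Rightarrow> 'a set \<Rightarrow> 'a \<Rightarrow> ('a \<Rightarrow> 'a) \<Rightarrow> ('a \<Rightarrow> 'a) \<Rightarrow> ('a \<Rightarrow> 'a set) \<Rightarrow> bool" where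
  "derived VG AG V r p l c \<longleftrightarrow> VG \<subseteq> V \<and> AG = {(u, v). u \<in> VG \<and> v \<in> VG \<and> v \<in> c u}"

definition depth :: "'a \<Rightarrow> ('a \<Rightarrow> 'a) \<Rightarrow> 'a \<Rightarrow> nat" where
  "depth r p v = (LEAST n. (p ^^ n) v = r)"

definition top_arc :: "('a \<times> 'a) set \<Rightarrow> 'a \<Rightarrow> ('a \<Rightarrow> 'a) \<Rightarrow> 'a \<Rightarrow> 'a \<Rightarrow> bool" where
  "top_arc AG r p u v \<longleftrightarrow> (u, v) \<in> AG \<and> (\<forall>w. (u, w) \<in> AG \<longrightarrow> depth r p v \<le> depth r p w)"

definition bottom_arc :: "('a \<times> 'a) set \<Rightarrow> 'a \<Rightarrow> ('a \<Rightarrow> 'a) \<Rightarrow> 'a \<Rightarrow> 'a \<Rightarrow> bool" where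
  "bottom_arc AG r p u v \<longleftrightarrow> (u, v) \<in> AG \<and> (\<forall>w. (u, w) \<in> AG \<longrightarrow> depth r p w \<le> depth r p v)"

end

theory Submission
  imports Defs "HOL-Library.Countable_Set"
begin

(* T' is built from spines: paths of fresh vertices, each one the last-born of its predecessor.
   There is one spine below a fresh root and one below every vertex g of G. A vertex y of G hangs,
   as a child that is not a last-born, off the spine of its nearest proper ancestor in G (the root
   spine if there is none), at height 2 depth y, plus one if y is a last-born of T. So the
   vertices of G are exactly the vertices of T' that are neither the root nor last-borns.
   A branch c u of T starts at l (p u), whose height is one more than that of u on the same spine:
   this is l' (p' u). The branch lifts to a branch of T' by walking down the current spine to the
   height of the next vertex of G on it, stepping onto that vertex and continuing down its own
   spine. The lift meets G in the same vertices in the same order, so the arcs of G are unchanged,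
   and so is the depth order among the out-neighbours of each vertex; hence top and bottom arcs
   agree. *)

lemma depth_root [simp]: "depth r p r = 0"
  unfolding depth_def by (rule Least_eq_0) simp

lemma funpow_depth_eq_root: "rooted_tree V r p \<Longrightarrow> v \<in> V \<Longrightarrow> (p ^^ depth r p v) v = r"
  unfolding rooted_tree_def depth_def by (meson LeastI)

lemma depth_parent:
  assumes T: "rooted_tree V r p" and v: "v \<in> V" "v \<noteq> r"
  shows "depth r p v = Suc (depth r p (p v))"
proof -
  have "depth r p v \<noteq> 0"
    using funpow_depth_eq_root[OF T v(1)] v(2) by (metis funpow_0)
  then obtain n where n: "depth r p v = Suc n" using not0_implies_Suc by blast
  then have "(p ^^ n) (p v) = r"
    using funpow_depth_eq_root[OF T v(1)] by (simp add: funpow_Suc_right del: funpow.simps)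
  then have le: "depth r p (p v) \<le> n" unfolding depth_def by (rule Least_le)
  have "(p ^^ Suc (depth r p (p v))) v = r"
    using LeastI[of "\<lambda>k. (p ^^ k) (p v) = r", OF \<open>(p ^^ n) (p v) = r\<close>]
    by (simp add: depth_def funpow_Suc_right del: funpow.simps)
  then have "depth r p v \<le> Suc (depth r p (p v))" unfolding depth_def by (rule Least_le)
  with le n show ?thesis by linarith
qed

lemma depth_child: "rooted_tree V r p \<Longrightarrow> is_child V r p x y \<Longrightarrow> depth r p y = Suc (depth r p x)"
  unfolding is_child_def using depth_parent by metis

lemma sorted_wrt_depth_if_successively_is_child:
  assumes "rooted_tree V r p" and "successively (is_child V r p) xs"
  shows "sorted_wrt (\<lambda>a b. depth r p a < depth r p b) xs"
proof -
  have "successively (\<lambda>a b. depth r p a < depth r p b) xs"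
    using assms(2) by (rule successively_mono) (simp add: depth_child[OF assms(1)])
  then show ?thesis by (simp add: successively_conv_sorted_wrt transp_on_def)
qed

lemma is_branch_set_iff_list:
  "is_branch_set V r p x S \<longleftrightarrow>
     (\<exists>xs. set xs = S \<and> successively (is_child V r p) xs \<and> (xs \<noteq> [] \<longrightarrow> hd xs = x \<and> x \<in> V))"
  unfolding is_branch_set_def successively_conv_nth
  by (metis (no_types, lifting) empty_set set_empty2 list.size(3) not_less_zero)

lemma successively_map_upt:
  assumes "\<And>i. s \<le> i \<Longrightarrow> Suc i < t \<Longrightarrow> P (g i) (g (Suc i))"
  shows "successively P (map g [s..<t])"
  unfolding successively_conv_nth using assms by auto

lemma le_iff_le_if_sorted_wrt_both:
  fixes f :: "'a \<Rightarrow> 'b::linorder" and g :: "'a \<Rightarrow> 'c::linorder"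
  assumes "sorted_wrt (\<lambda>a b. f a < f b) xs" and "sorted_wrt (\<lambda>a b. g a < g b) xs"
    and "a \<in> set xs" and "b \<in> set xs"
  shows "f a \<le> f b \<longleftrightarrow> g a \<le> g b"
  using assms by (induction xs) (auto intro: less_imp_le dest: leD)

lemma top_bottom_arc_iff_if_same_depth_order:
  assumes "\<And>w w'. (u, w) \<in> AG \<Longrightarrow> (u, w') \<in> AG \<Longrightarrow>
      depth r p w \<le> depth r p w' \<longleftrightarrow> depth r' p' w \<le> depth r' p' w'"
    and "(u, v) \<in> AG"
  shows "(top_arc AG r p u v \<longleftrightarrow> top_arc AG r' p' u v)
       \<and> (bottom_arc AG r p u v \<longleftrightarrow> bottom_arc AG r' p' u v)"
  unfolding top_arc_def bottom_arc_def using assms by blast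

fun nearest_ancestor_in :: "'a set \<Rightarrow> ('a \<Rightarrow> 'a) \<Rightarrow> nat \<Rightarrow> 'a \<Rightarrow> 'a option" where
  "nearest_ancestor_in S p 0 y = None"
| "nearest_ancestor_in S p (Suc n) y =
     (if p y \<in> S then Some (p y) else nearest_ancestor_in S p n (p y))"

lemma nearest_ancestor_in_Some:
  assumes "rooted_tree V r p" and "y \<in> V" and "nearest_ancestor_in S p (depth r p y) y = Some g"
  shows "g \<in> S \<and> depth r p g < depth r p y"
  using assms(2,3)
proof (induction "depth r p y" arbitrary: y)
  case 0
  then show ?case by (simp flip: 0(1))
next
  case (Suc n)
  have "y \<noteq> r" using Suc.hyps(2) by auto
  then have py: "p y \<in> V" and d: "depth r p y = Suc (depth r p (p y))"
    using assms(1) Suc.prems(1) depth_parent[OF assms(1)] unfolding rooted_tree_def by auto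
  show ?case using Suc.hyps(1)[OF _ py] Suc.hyps(2) Suc.prems(2) d by (auto split: if_splits)
qed

lemma fresh_embedding:
  assumes "infinite (UNIV :: 'a set)" and "finite S" and "countable A"
  obtains f :: "'b \<Rightarrow> 'a" where "inj_on f A" and "\<And>x. f x \<notin> S"
proof -
  have "infinite (- S)"
    using assms(1,2) by (simp add: Compl_eq_Diff_UNIV Diff_infinite_finite)
  then obtain g :: "nat \<Rightarrow> 'a" where g: "inj g" "range g \<subseteq> - S"
    using infinite_countable_subset by blast
  obtain e :: "'b \<Rightarrow> nat" where "inj_on e A"
    using assms(3) unfolding countable_def by blast
  then show thesis
    using that[of "g \<circ> e"] g by (auto simp: comp_inj_on inj_on_subset)
qed

locale burling_completion =
  fixes V :: "'a set" and r :: 'a and p l :: "'a \<Rightarrow> 'a" and c :: "'a \<Rightarrow> 'a set"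
    and VG :: "'a set" and fresh :: "'a option \<times> nat \<Rightarrow> 'a"
  assumes burling: "burling_tree V r p l c"
    and VG_subset: "VG \<subseteq> V"
    and inj_fresh: "inj_on fresh (insert None (Some ` VG) \<times> UNIV)"
    and fresh_notin_VG: "fresh x \<notin> VG"
begin

definition heads :: "'a option set" where
  "heads = insert None (Some ` VG)"

definition node :: "'a option \<Rightarrow> nat \<Rightarrow> 'a" where
  "node h i = (case h of Some g \<Rightarrow> if i = 0 then g else fresh (h, i) | None \<Rightarrow> fresh (h, i))"

definition root' :: 'a where
  "root' = node None 0"

definition anc :: "'a \<Rightarrow> 'a option" where
  "anc y = nearest_ancestor_in VG p (depth r p y) y"

definition height :: "'a \<Rightarrow> nat" where
  "height x = 2 * depth r p x + (if is_last_born V r p l x then 1 else 0)"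

definition spine_top :: nat where
  "spine_top = Suc (Max (height ` VG))"

definition V' :: "'a set" where
  "V' = (\<lambda>(h, i). node h i) ` (heads \<times> {..spine_top})"

definition coord :: "'a \<Rightarrow> 'a option \<times> nat" where
  "coord = inv_into (heads \<times> UNIV) (\<lambda>(h, i). node h i)"

definition p' :: "'a \<Rightarrow> 'a" where
  "p' x = (if x \<in> VG then node (anc x) (height x) else node (fst (coord x)) (snd (coord x) - 1))"

definition l' :: "'a \<Rightarrow> 'a" where
  "l' x = node (fst (coord x)) (Suc (snd (coord x)))"

lemma rooted: "rooted_tree V r p"
  using burling unfolding burling_tree_def by simp

lemma l_is_child: "v \<in> V \<Longrightarrow> \<not> is_leaf V r p v \<Longrightarrow> is_child V r p v (l v)"
  using burling unfolding burling_tree_def by blast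

lemma c_cases: "v \<in> V \<Longrightarrow> if v = r \<or> is_last_born V r p l v then c v = {}
    else is_branch_set V r p (l (p v)) (c v)"
  using burling unfolding burling_tree_def by blast

lemma finite_VG: "finite VG"
  using VG_subset rooted finite_subset unfolding rooted_tree_def by blast

lemma node_Some_0 [simp]: "node (Some g) 0 = g"
  by (simp add: node_def)

lemma node_notin_VG: "0 < i \<Longrightarrow> node h i \<notin> VG"
  by (simp add: node_def fresh_notin_VG split: option.split)

lemma node_in_VG_iff: "h \<in> heads \<Longrightarrow> node h i \<in> VG \<longleftrightarrow> i = 0 \<and> h \<noteq> None"
  by (auto simp: heads_def node_def fresh_notin_VG split: if_splits)

lemma node_eq_fresh: "\<not> (i = 0 \<and> h \<noteq> None) \<Longrightarrow> node h i = fresh (h, i)"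
  by (auto simp: node_def split: option.split)

lemma inj_on_node: "inj_on (\<lambda>(h, i). node h i) (heads \<times> UNIV)"
proof (rule inj_onI, clarify)
  fix h i h' i' assume hs: "h \<in> heads" "h' \<in> heads" and eq: "node h i = node h' i'"
  have same: "i = 0 \<and> h \<noteq> None \<longleftrightarrow> i' = 0 \<and> h' \<noteq> None"
    using node_in_VG_iff[OF hs(1), of i] node_in_VG_iff[OF hs(2), of i'] eq by simp
  show "h = h' \<and> i = i'"
  proof (cases "i = 0 \<and> h \<noteq> None")
    case True
    with same eq show ?thesis by auto
  next
    case False
    with same eq have "fresh (h, i) = fresh (h', i')" by (simp add: node_eq_fresh)
    moreover have "(h, i) \<in> heads \<times> UNIV" "(h', i') \<in> heads \<times> UNIV" using hs by auto
    ultimately show ?thesis using inj_onD[OF inj_fresh] unfolding heads_def by blast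
  qed
qed

lemma node_eq_iff: "h \<in> heads \<Longrightarrow> h' \<in> heads \<Longrightarrow> node h i = node h' i' \<longleftrightarrow> h = h' \<and> i = i'"
  using inj_onD[OF inj_on_node, of "(h, i)" "(h', i')"] by auto

lemma coord_node [simp]: "h \<in> heads \<Longrightarrow> coord (node h i) = (h, i)"
  unfolding coord_def using inv_into_f_f[OF inj_on_node, of "(h, i)"] by simp

lemma p'_node_Suc [simp]: "h \<in> heads \<Longrightarrow> p' (node h (Suc i)) = node h i"
  by (simp add: p'_def node_notin_VG)

lemma l'_node [simp]: "h \<in> heads \<Longrightarrow> l' (node h i) = node h (Suc i)"
  by (simp add: l'_def)

lemma anc_Some: "y \<in> V \<Longrightarrow> anc y = Some g \<Longrightarrow> g \<in> VG \<and> depth r p g < depth r p y"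
  unfolding anc_def using nearest_ancestor_in_Some[OF rooted] by blast

lemma anc_in_heads: "y \<in> V \<Longrightarrow> anc y \<in> heads"
  using anc_Some unfolding heads_def by (cases "anc y") auto

lemma anc_parent: "y \<in> V \<Longrightarrow> y \<noteq> r \<Longrightarrow> anc y = (if p y \<in> VG then Some (p y) else anc (p y))"
  unfolding anc_def using depth_parent[OF rooted] by simp

lemma height_less_spine_top: "g \<in> VG \<Longrightarrow> height g < spine_top"
  unfolding spine_top_def using finite_VG by (simp add: le_imp_less_Suc)

lemma height_bounds: "2 * depth r p x \<le> height x" "height x \<le> Suc (2 * depth r p x)"
  unfolding height_def by auto

lemma VG_subset_heads: "g \<in> VG \<Longrightarrow> Some g \<in> heads"
  by (simp add: heads_def)

lemma None_in_heads [simp]: "None \<in> heads"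
  by (simp add: heads_def)

lemma root'_notin_VG: "root' \<notin> VG"
  by (simp add: root'_def node_in_VG_iff)

lemma node_in_V': "h \<in> heads \<Longrightarrow> i \<le> spine_top \<Longrightarrow> node h i \<in> V'"
  unfolding V'_def by (rule image_eqI[of _ _ "(h, i)"]) auto

lemma V'_cases:
  assumes "v \<in> V'"
  obtains h i where "h \<in> heads" "i \<le> spine_top" "v = node h i"
  using assms unfolding V'_def by auto

lemma VG_subset_V': "VG \<subseteq> V'"
  using node_in_V'[OF VG_subset_heads, of _ 0] by auto

lemma funpow_p'_node: "h \<in> heads \<Longrightarrow> (p' ^^ i) (node h i) = node h 0"
  by (induction i) (simp_all add: funpow_Suc_right del: funpow.simps)

lemma reaches_root'_from_VG: "g \<in> VG \<Longrightarrow> \<exists>n. (p' ^^ n) g = root'"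
proof (induction "depth r p g" arbitrary: g rule: less_induct)
  case less
  have g: "g \<in> V" using less.prems VG_subset by blast
  have up: "(p' ^^ Suc (height g)) g = node (anc g) 0"
    using funpow_p'_node[OF anc_in_heads[OF g]] less.prems
    by (simp add: funpow_Suc_right p'_def del: funpow.simps)
  show ?case
  proof (cases "anc g")
    case None
    then have "(p' ^^ Suc (height g)) g = root'" using up by (simp add: root'_def)
    then show ?thesis by blast
  next
    case (Some a)
    with anc_Some[OF g] less.hyps obtain n where "(p' ^^ n) a = root'" by blast
    then have "(p' ^^ (n + Suc (height g))) g = root'"
      using up Some by (simp only: funpow_add comp_apply node_Some_0)
    then show ?thesis by blast
  qed
qed

lemma rooted': "rooted_tree V' root' p'"
  unfolding rooted_tree_def
proof (intro conjI ballI)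
  show "finite V'"
    unfolding V'_def heads_def using finite_VG by simp
  show "root' \<in> V'"
    unfolding root'_def by (simp add: node_in_V')
next
  fix v assume "v \<in> V' - {root'}"
  then obtain h i where v: "h \<in> heads" "i \<le> spine_top" "v = node h i" "v \<noteq> root'"
    by (auto elim: V'_cases)
  show "p' v \<in> V'"
  proof (cases i)
    case 0
    with v have "v \<in> VG" by (cases h) (auto simp: heads_def root'_def)
    then show ?thesis
      using VG_subset anc_in_heads height_less_spine_top node_in_V' by (auto simp: p'_def less_imp_le)
  next
    case (Suc j)
    with v show ?thesis by (simp add: node_in_V')
  qed
next
  fix v assume "v \<in> V'"
  then obtain h i where v: "h \<in> heads" "v = node h i" by (auto elim: V'_cases)
  obtain n where "(p' ^^ n) (node h 0) = root'"
  proof (cases h)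
    case None
    then show ?thesis using that[of 0] by (simp add: root'_def)
  next
    case (Some g)
    then have "g \<in> VG" using v(1) by (auto simp: heads_def)
    then show ?thesis using that reaches_root'_from_VG Some by auto
  qed
  then have "(p' ^^ (n + i)) v = root'"
    using funpow_p'_node[OF v(1)] v(2) by (simp only: funpow_add comp_apply)
  then show "\<exists>n. (p' ^^ n) v = root'" by blast
qed

lemma is_child_node_Suc:
  "h \<in> heads \<Longrightarrow> Suc i \<le> spine_top \<Longrightarrow> is_child V' root' p' (node h i) (node h (Suc i))"
  unfolding is_child_def root'_def by (simp add: node_in_V' node_eq_iff)

lemma is_child_attach: "g \<in> VG \<Longrightarrow> is_child V' root' p' (node (anc g) (height g)) g"
  unfolding is_child_def using VG_subset_V' root'_notin_VG by (auto simp: p'_def)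

lemma less_spine_top_if_not_leaf:
  assumes h: "h \<in> heads" and "\<not> is_leaf V' root' p' (node h i)"
  shows "i < spine_top"
proof -
  obtain w where w: "w \<in> V'" "w \<noteq> root'" "p' w = node h i"
    using assms(2) unfolding is_leaf_def is_child_def by blast
  then obtain h' i' where w': "h' \<in> heads" "i' \<le> spine_top" "w = node h' i'" by (auto elim: V'_cases)
  show ?thesis
  proof (cases i')
    case 0
    with w w' have "w \<in> VG" by (cases h') (auto simp: heads_def root'_def)
    then have "node (anc w) (height w) = node h i" using w(3) by (simp add: p'_def)
    then have "i = height w"
      using h anc_in_heads VG_subset \<open>w \<in> VG\<close> by (auto simp: node_eq_iff)
    then show ?thesis using height_less_spine_top[OF \<open>w \<in> VG\<close>] by simp
  next
    case (Suc j)
    with w w' have "node h' j = node h i" by simp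
    then have "j = i" using h w'(1) by (simp add: node_eq_iff)
    then show ?thesis using Suc w'(2) by simp
  qed
qed

lemma is_child_l': "v \<in> V' \<Longrightarrow> \<not> is_leaf V' root' p' v \<Longrightarrow> is_child V' root' p' v (l' v)"
  by (erule V'_cases) (simp add: is_child_node_Suc less_spine_top_if_not_leaf Suc_leI)

lemma in_VG_iff_not_root_not_last_born:
  assumes v: "v \<in> V'"
  shows "v \<in> VG \<longleftrightarrow> v \<noteq> root' \<and> \<not> is_last_born V' root' p' l' v"
proof -
  obtain h i where hi: "h \<in> heads" "i \<le> spine_top" "v = node h i" using v by (rule V'_cases)
  have "is_last_born V' root' p' l' v \<longleftrightarrow> 0 < i"
  proof
    assume "is_last_born V' root' p' l' v"
    then obtain u where "u \<in> V'" "v = l' u" unfolding is_last_born_def by blast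
    then obtain h' i' where "h' \<in> heads" "v = node h' (Suc i')" by (auto elim: V'_cases)
    then show "0 < i" using hi by (simp add: node_eq_iff)
  next
    assume "0 < i"
    then obtain j where j: "i = Suc j" using gr0_implies_Suc by blast
    have "is_child V' root' p' (node h j) v" using is_child_node_Suc hi j by simp
    then have "\<not> is_leaf V' root' p' (node h j)" unfolding is_leaf_def by blast
    moreover have "node h j \<in> V'" using node_in_V' hi j by simp
    ultimately show "is_last_born V' root' p' l' v"
      unfolding is_last_born_def using hi j by force
  qed
  then show ?thesis using hi by (cases h) (auto simp: heads_def root'_def node_in_VG_iff)
qed

lemma anc_height_child:
  assumes "is_child V r p x y"
  shows "anc y = (if x \<in> VG then Some x else anc x) \<and> height x < height y"
proof -
  have "y \<in> V" "y \<noteq> r" "p y = x" using assms unfolding is_child_def by auto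
  moreover have "depth r p y = Suc (depth r p x)" using depth_child[OF rooted assms] .
  ultimately show ?thesis using anc_parent height_bounds[of x] height_bounds[of y] by auto
qed

definition liftable :: "'a option \<Rightarrow> nat \<Rightarrow> 'a list \<Rightarrow> bool" where
  "liftable h s xs \<longleftrightarrow> successively (is_child V r p) xs
     \<and> (xs \<noteq> [] \<longrightarrow> anc (hd xs) = h \<and> 0 < s \<and> s \<le> height (hd xs))"

lemma liftable_Cons_VG: "liftable h s (x # xs) \<Longrightarrow> x \<in> VG \<Longrightarrow> liftable (Some x) 1 xs"
  unfolding liftable_def using anc_height_child[of x "hd xs"] by (auto simp: successively_Cons)

lemma liftable_Cons_not_VG: "liftable h s (x # xs) \<Longrightarrow> x \<notin> VG \<Longrightarrow> liftable h s xs"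
  unfolding liftable_def using anc_height_child[of x "hd xs"] by (auto simp: successively_Cons)

primrec lift :: "'a option \<Rightarrow> nat \<Rightarrow> 'a list \<Rightarrow> 'a list" where
  "lift h s [] = []"
| "lift h s (x # xs) = (if x \<in> VG
     then map (node h) [s..<Suc (height x)] @ x # lift (Some x) 1 xs
     else lift h s xs)"

lemma filter_lift: "0 < s \<Longrightarrow> filter (\<lambda>x. x \<in> VG) (lift h s xs) = filter (\<lambda>x. x \<in> VG) xs"
proof (induction xs arbitrary: h s)
  case (Cons x xs)
  have "filter (\<lambda>x. x \<in> VG) (map (node h) [s..<Suc (height x)]) = []"
    using Cons.prems by (auto simp: filter_empty_conv node_notin_VG)
  then show ?case using Cons by simp
qed simp

lemma successively_is_child_lift:
  "liftable h s xs \<Longrightarrow> successively (is_child V' root' p') (lift h s xs)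
     \<and> (lift h s xs \<noteq> [] \<longrightarrow> hd (lift h s xs) = node h s)"
proof (induction xs arbitrary: h s)
  case (Cons x xs)
  show ?case
  proof (cases "x \<in> VG")
    case False
    then show ?thesis using Cons.IH[OF liftable_Cons_not_VG[OF Cons.prems False]] by simp
  next
    case True
    define seg where "seg = map (node h) [s..<Suc (height x)]"
    define rest where "rest = lift (Some x) 1 xs"
    have h: "h = anc x" and s: "0 < s" "s \<le> height x"
      using Cons.prems unfolding liftable_def by auto
    have hh: "h \<in> heads" using h True VG_subset anc_in_heads by blast
    have below_top: "height x < spine_top" using height_less_spine_top[OF True] .
    have rest: "successively (is_child V' root' p') rest" "rest \<noteq> [] \<Longrightarrow> hd rest = node (Some x) 1"
      using Cons.IH[OF liftable_Cons_VG[OF Cons.prems True]] unfolding rest_def by auto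
    have "successively (is_child V' root' p') seg"
      unfolding seg_def by (rule successively_map_upt) (use is_child_node_Suc[OF hh] below_top in auto)
    moreover have "seg \<noteq> []" "last seg = node h (height x)"
      using s unfolding seg_def by (auto simp: last_map)
    moreover have "hd seg = node h s"
      using s unfolding seg_def by (simp add: upt_conv_Cons del: upt_Suc)
    moreover have "is_child V' root' p' (node h (height x)) x"
      using is_child_attach[OF True] h by simp
    moreover have "successively (is_child V' root' p') (x # rest)"
      using rest is_child_node_Suc[OF VG_subset_heads[OF True], of 0] below_top
      by (cases "rest = []") (auto simp: successively_Cons)
    moreover have "lift h s (x # xs) = seg @ x # rest"
      using True by (simp add: seg_def rest_def)
    ultimately show ?thesis by (simp add: successively_append_iff)
  qed
qed simp

definition branch_list :: "'a \<Rightarrow> 'a list" where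
  "branch_list u = (SOME xs. set xs = c u \<and> successively (is_child V r p) xs
     \<and> (xs \<noteq> [] \<longrightarrow> hd xs = l (p u) \<and> l (p u) \<in> V))"

lemma branch_list_spec:
  assumes "u \<in> V"
  shows "set (branch_list u) = c u \<and> successively (is_child V r p) (branch_list u)
     \<and> (branch_list u \<noteq> [] \<longrightarrow> hd (branch_list u) = l (p u) \<and> l (p u) \<in> V)"
proof -
  have "is_branch_set V r p (l (p u)) (c u)"
    using c_cases[OF assms] by (auto simp: is_branch_set_def split: if_splits)
  then show ?thesis
    unfolding branch_list_def is_branch_set_iff_list by (rule someI_ex)
qed

lemma liftable_branch_list:
  assumes u: "u \<in> VG"
  shows "liftable (anc u) (Suc (height u)) (branch_list u)"
proof (cases "branch_list u = []")
  case False
  have uV: "u \<in> V" using u VG_subset by blast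
  then have "c u \<noteq> {}" using branch_list_spec[OF uV] False by auto
  then have "u \<noteq> r" and not_lb: "\<not> is_last_born V r p l u"
    using c_cases[OF uV] by (auto split: if_splits)
  then have pu: "is_child V r p (p u) u" using uV by (simp add: is_child_def)
  then have nl: "\<not> is_leaf V r p (p u)" unfolding is_leaf_def by blast
  have pu_V: "p u \<in> V" using pu rooted \<open>u \<noteq> r\<close> uV unfolding rooted_tree_def by blast
  have first: "is_child V r p (p u) (l (p u))" using l_is_child[OF pu_V nl] .
  have "is_last_born V r p l (l (p u))"
    unfolding is_last_born_def using pu_V nl by blast
  moreover have "depth r p (l (p u)) = depth r p u"
    using depth_child[OF rooted first] depth_child[OF rooted pu] by simp
  ultimately have "height (l (p u)) = Suc (height u)" using not_lb by (simp add: height_def)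
  moreover have "anc (l (p u)) = anc u"
    using anc_height_child[OF first] anc_height_child[OF pu] by simp
  ultimately show ?thesis
    using branch_list_spec[OF uV] False unfolding liftable_def by simp
qed (simp add: liftable_def)

definition c' :: "'a \<Rightarrow> 'a set" where
  "c' u = (if u \<in> VG then set (lift (anc u) (Suc (height u)) (branch_list u)) else {})"

lemma c'_inter_VG: "u \<in> VG \<Longrightarrow> c' u \<inter> VG = c u \<inter> VG"
proof -
  assume u: "u \<in> VG"
  have "set (filter (\<lambda>x. x \<in> VG) (lift (anc u) (Suc (height u)) (branch_list u)))
      = set (filter (\<lambda>x. x \<in> VG) (branch_list u))"
    by (simp only: filter_lift zero_less_Suc)
  then show ?thesis using u branch_list_spec[of u] VG_subset by (auto simp: c'_def)
qed

lemma burling_tree': "burling_tree V' root' p' l' c'"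
  unfolding burling_tree_def
proof (intro conjI ballI impI)
  show "rooted_tree V' root' p'" by (rule rooted')
next
  fix v assume "v \<in> V'" "\<not> is_leaf V' root' p' v"
  then show "is_child V' root' p' v (l' v)" by (rule is_child_l')
next
  fix v assume v: "v \<in> V'"
  show "if v = root' \<or> is_last_born V' root' p' l' v then c' v = {}
        else is_branch_set V' root' p' (l' (p' v)) (c' v)"
  proof (cases "v \<in> VG")
    case False
    then have "v = root' \<or> is_last_born V' root' p' l' v"
      using in_VG_iff_not_root_not_last_born[OF v] by blast
    then show ?thesis using False by (simp add: c'_def)
  next
    case True
    have "l' (p' v) = node (anc v) (Suc (height v))"
      using True VG_subset anc_in_heads by (auto simp: p'_def)
    moreover have "node (anc v) (Suc (height v)) \<in> V'"
      using True VG_subset by (intro node_in_V' anc_in_heads) (auto simp: Suc_le_eq height_less_spine_top)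
    ultimately have "is_branch_set V' root' p' (l' (p' v)) (c' v)"
      unfolding is_branch_set_iff_list c'_def
      using True successively_is_child_lift[OF liftable_branch_list[OF True]] by auto
    then show ?thesis using in_VG_iff_not_root_not_last_born[OF v] True by simp
  qed
qed

lemma derived': "derived VG AG V r p l c \<Longrightarrow> derived VG AG V' root' p' l' c'"
  unfolding derived_def using VG_subset_V' c'_inter_VG by blast

lemma depth_order_out_neighbours_iff:
  assumes u: "u \<in> VG" and "a \<in> c u \<inter> VG" "b \<in> c u \<inter> VG"
  shows "depth r p a \<le> depth r p b \<longleftrightarrow> depth root' p' a \<le> depth root' p' b"
proof -
  define xs where "xs = branch_list u"
  define ys where "ys = lift (anc u) (Suc (height u)) xs"
  have xs: "set xs = c u" "successively (is_child V r p) xs"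
    using branch_list_spec u VG_subset unfolding xs_def by auto
  have ys: "successively (is_child V' root' p') ys"
    using successively_is_child_lift[OF liftable_branch_list[OF u]] unfolding xs_def ys_def by simp
  have filter_eq: "filter (\<lambda>x. x \<in> VG) ys = filter (\<lambda>x. x \<in> VG) xs"
    unfolding ys_def by (simp add: filter_lift)
  show ?thesis
  proof (rule le_iff_le_if_sorted_wrt_both)
    show "sorted_wrt (\<lambda>a b. depth r p a < depth r p b) (filter (\<lambda>x. x \<in> VG) xs)"
      using sorted_wrt_depth_if_successively_is_child[OF rooted xs(2)] by (rule sorted_wrt_filter)
    show "sorted_wrt (\<lambda>a b. depth root' p' a < depth root' p' b) (filter (\<lambda>x. x \<in> VG) xs)"
      using sorted_wrt_filter[OF sorted_wrt_depth_if_successively_is_child[OF rooted' ys],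
          of "\<lambda>x. x \<in> VG"]
      unfolding filter_eq .
  qed (use assms xs in auto)
qed

lemma top_bottom_arc_iff':
  assumes "derived VG AG V r p l c" and "(u, v) \<in> AG"
  shows "(top_arc AG r p u v \<longleftrightarrow> top_arc AG root' p' u v)
       \<and> (bottom_arc AG r p u v \<longleftrightarrow> bottom_arc AG root' p' u v)"
proof (rule top_bottom_arc_iff_if_same_depth_order[OF _ assms(2)])
  fix w w' assume "(u, w) \<in> AG" "(u, w') \<in> AG"
  then show "depth r p w \<le> depth r p w' \<longleftrightarrow> depth root' p' w \<le> depth root' p' w'"
    using assms(1) depth_order_out_neighbours_iff unfolding derived_def by auto
qed

end

theorem lemma3p5:
  fixes V :: "'a set" and r :: 'a and p l :: "'a \<Rightarrow> 'a" and c :: "'a \<Rightarrow> 'a set"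
    and VG :: "'a set" and AG :: "('a \<times> 'a) set"
  assumes "infinite (UNIV :: 'a set)"
    and "burling_tree V r p l c"
    and "derived VG AG V r p l c"
  shows "\<exists>V' r' p' l' c'. burling_tree V' r' p' l' c' \<and> derived VG AG V' r' p' l' c'
     \<and> (\<forall>v \<in> V'. v \<in> VG \<longleftrightarrow> (v \<noteq> r' \<and> \<not> is_last_born V' r' p' l' v))
     \<and> (\<forall>u v. (u, v) \<in> AG \<longrightarrow>
           (top_arc AG r p u v \<longleftrightarrow> top_arc AG r' p' u v)
         \<and> (bottom_arc AG r p u v \<longleftrightarrow> bottom_arc AG r' p' u v))"
proof -
  have VG: "VG \<subseteq> V" using assms(3) unfolding derived_def by simp
  then have "finite VG"
    using assms(2) finite_subset unfolding burling_tree_def rooted_tree_def by blast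
  moreover have "countable (insert None (Some ` VG) \<times> (UNIV :: nat set))"
    using countable_finite[of "insert None (Some ` VG)"] \<open>finite VG\<close>
    by (intro countable_SIGMA) auto
  ultimately obtain fresh :: "'a option \<times> nat \<Rightarrow> 'a"
    where "inj_on fresh (insert None (Some ` VG) \<times> UNIV)" and "\<And>x. fresh x \<notin> VG"
    using fresh_embedding[OF assms(1)] by blast
  then interpret burling_completion V r p l c VG fresh
    using assms(2) VG by unfold_locales
  show ?thesis
    using burling_tree' derived'[OF assms(3)] in_VG_iff_not_root_not_last_born
      top_bottom_arc_iff'[OF assms(3)]
    by blast
qed

end
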